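(* Let $V$ be a finite nonempty set and $U\subseteq V$. For every $x\in X_V$, the vector $x'\in\{0,1\}^{P_V}$ defined by $x'_{pq}=0$ if $pq\in U\times(V\setminus U)$ and $x'_{pq}=x_{pq}$ otherwise, satisfies $x'\in X_V$.
   Context: $P_V=\{pq\in V^2\mid p\neq q\}$. $X_V$ is the set of all $x\in\{0,1\}^{P_V}$ such that $x_{pq}+x_{qr}-x_{pr}\le 1$ for all pairwise distinct $p,q,r\in V$. *)

theory Defs
  imports Main
begin

definition P :: "'a set \<Rightarrow> ('a \<times> 'a) set" where
  "P V = {(p, q). p \<in> V \<and> q \<in> V \<and> p \<noteq> q}"

text \<open>Vectors in {0,1}^{P_V} are represented as functions on pairs, with
  values in {0,1} on P V and the fixed value 0 outside P V.\<close>
definition binvec :: "'a set \<Rightarrow> ('a \<times> 'a \<Rightarrow> int) set" where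
  "binvec V = {x. (\<forall>e\<in>P V. x e \<in> {0, 1}) \<and> (\<forall>e. e \<notin> P V \<longrightarrow> x e = 0)}"

definition X :: "'a set \<Rightarrow> ('a \<times> 'a \<Rightarrow> int) set" where
  "X V = {x \<in> binvec V. \<forall>p\<in>V. \<forall>q\<in>V. \<forall>r\<in>V.
            p \<noteq> q \<and> q \<noteq> r \<and> p \<noteq> r \<longrightarrow> x (p, q) + x (q, r) - x (p, r) \<le> 1}"

end

theory Submission
  imports Defs
begin

text \<open>Zeroing the arcs of the cut from \<open>U\<close> to \<open>V - U\<close> keeps the vector binary and only
  lowers entries, so a triangle inequality \<open>x'(p,q) + x'(q,r) - x'(p,r) \<le> 1\<close> can only fail
  when \<open>x'(p,r)\<close> was lowered, i.e. \<open>p \<in> U\<close> and \<open>r \<notin> U\<close>. But then, wherever \<open>q\<close> lies,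
  one of the arcs \<open>(p,q)\<close>, \<open>(q,r)\<close> also crosses the cut, so the left-hand side is at most 1.\<close>

definition zero_cut :: "'a set \<Rightarrow> 'a set \<Rightarrow> ('a \<times> 'a \<Rightarrow> int) \<Rightarrow> 'a \<times> 'a \<Rightarrow> int" where
  "zero_cut V U x = (\<lambda>(p, q). if (p, q) \<in> P V \<and> p \<in> U \<and> q \<in> V - U then 0 else x (p, q))"

lemma binvec_zero_on:
  assumes "x \<in> binvec V"
  shows "(\<lambda>e. if S e then 0 else x e) \<in> binvec V"
  using assms unfolding binvec_def by auto

lemma zero_cut_binvec:
  assumes "x \<in> binvec V"
  shows "zero_cut V U x \<in> binvec V"
proof -
  have "zero_cut V U x = (\<lambda>e. if e \<in> P V \<and> fst e \<in> U \<and> snd e \<in> V - U then 0 else x e)"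
    unfolding zero_cut_def by auto
  then show ?thesis
    using binvec_zero_on[OF assms] by simp
qed

lemma binvecD:
  assumes "x \<in> binvec V" and "p \<in> V" and "q \<in> V" and "p \<noteq> q"
  shows "x (p, q) = 0 \<or> x (p, q) = 1"
  using assms unfolding binvec_def P_def by auto

lemma X_binvec: "x \<in> X V \<Longrightarrow> x \<in> binvec V"
  unfolding X_def by blast

lemma XD_triangle:
  assumes "x \<in> X V" and "p \<in> V" and "q \<in> V" and "r \<in> V"
    and "p \<noteq> q" and "q \<noteq> r" and "p \<noteq> r"
  shows "x (p, q) + x (q, r) - x (p, r) \<le> 1"
  using assms unfolding X_def by blast

lemma zero_cut_triangle:
  assumes x: "x \<in> X V" and "p \<in> V" and "q \<in> V" and "r \<in> V"
    and "p \<noteq> q" and "q \<noteq> r" and "p \<noteq> r"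
  shows "zero_cut V U x (p, q) + zero_cut V U x (q, r) - zero_cut V U x (p, r) \<le> 1"
proof -
  have bin: "x \<in> binvec V"
    using x by (rule X_binvec)
  show ?thesis
  proof (cases "p \<in> U \<and> r \<notin> U")
    case True
    with bin have "zero_cut V U x (p, q) \<le> 1" "zero_cut V U x (q, r) \<le> 1"
      using assms binvecD[of x V p q] binvecD[of x V q r] unfolding zero_cut_def by auto
    moreover have "zero_cut V U x (p, q) = 0 \<or> zero_cut V U x (q, r) = 0"
      using True assms unfolding zero_cut_def P_def by auto
    moreover have "zero_cut V U x (p, r) = 0"
      using True assms unfolding zero_cut_def P_def by auto
    ultimately show ?thesis
      by linarith
  next
    case False
    with bin have "zero_cut V U x (p, q) \<le> x (p, q)" "zero_cut V U x (q, r) \<le> x (q, r)"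
      using assms binvecD[of x V p q] binvecD[of x V q r] unfolding zero_cut_def by auto
    moreover have "zero_cut V U x (p, r) = x (p, r)"
      using False unfolding zero_cut_def by auto
    ultimately show ?thesis
      using XD_triangle[OF assms(1-7)] by linarith
  qed
qed

lemma zero_cut_X:
  assumes "x \<in> X V"
  shows "zero_cut V U x \<in> X V"
proof -
  have "zero_cut V U x \<in> binvec V"
    using assms by (intro zero_cut_binvec X_binvec)
  then show ?thesis
    using zero_cut_triangle[OF assms] unfolding X_def by blast
qed

theorem lemma5p2:
  fixes V U :: "'a set" and x :: "'a \<times> 'a \<Rightarrow> int"
  assumes "finite V" and "V \<noteq> {}" and "U \<subseteq> V" and "x \<in> X V"
  shows "(\<lambda>(p, q). if (p, q) \<in> P V \<and> p \<in> U \<and> q \<in> V - U then 0 else x (p, q)) \<in> X V"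
  using zero_cut_X[OF assms(4), of U] unfolding zero_cut_def .

end
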